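(* Let $n\ge2$ and let $\mathsf{b}$ be a $C_n$-bivaluation. Then the map $\nu$ from formulas to $B_n$ given by $\nu(\alpha)=(\mathsf{b}(\alpha),\mathsf{b}(\neg\alpha),\mathsf{b}(\alpha^1),\dots,\mathsf{b}(\alpha^{n-1}))$ is a valuation belonging to $\mathcal{F}_{C_n}$, and for every formula $\alpha$, $\mathsf{b}(\alpha)=1$ iff $\nu(\alpha)\in D_n$.
   Context: $\Sigma$ has unary $\neg$ and binary $\wedge,\vee,\to$; formulas over a denumerable set of variables; $\alpha^0=\alpha$, $\alpha^{k+1}=\neg(\alpha^k\wedge\neg\alpha^k)$. A $C_n$-bivaluation is a map $\mathsf{b}$ from formulas to $\{0,1\}$ such that: (B1) $\mathsf{b}(\alpha\wedge\beta)=1$ iff $\mathsf{b}(\alpha)=\mathsf{b}(\beta)=1$; (B2) $\mathsf{b}(\alpha\vee\beta)=1$ iff $\mathsf{b}(\alpha)=1$ or $\mathsf{b}(\beta)=1$; (B3) $\mathsf{b}(\alpha\to\beta)=1$ iff $\mathsf{b}(\alpha)=0$ or $\mathsf{b}(\beta)=1$; (B4) $\mathsf{b}(\alpha)=0$ implies $\mathsf{b}(\neg\alpha)=1$; (B5) $\mathsf{b}(\neg\neg\alpha)=1$ implies $\mathsf{b}(\alpha)=1$; (B6)$_n$ $\mathsf{b}(\alpha^{n-1})=\mathsf{b}(\neg(\alpha^{n-1}))$ iff $\mathsf{b}(\alpha^n)=0$; (B7) $\mathsf{b}(\alpha)=\mathsf{b}(\neg\alpha)$ iff $\mathsf{b}(\neg(\alpha^1))=1$;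 (B8) if $\mathsf{b}(\alpha)\ne\mathsf{b}(\neg\alpha)$ and $\mathsf{b}(\beta)\ne\mathsf{b}(\neg\beta)$ then $\mathsf{b}(\alpha\#\beta)\ne\mathsf{b}(\neg(\alpha\#\beta))$ for $\#\in\{\wedge,\vee,\to\}$. Fix $n\ge2$. $B_n=\{z\in\{0,1\}^{n+1}:(z_1\wedge\dots\wedge z_k)\vee z_{k+1}=1\text{ for all }1\le k\le n\}$, with elements $T_n=(1,0,1,\dots,1)$, $t^n_i$ ($0\le i\le n-2$) having $z_1=z_2=1$ and a single $0$ at coordinate $i+3$, $t^n_{n-1}=(1,\dots,1)$, $F_n=(0,1,\dots,1)$. $D_n=\{z:z_1=1\}$, $Boo_n=\{T_n,F_n\}$, $I_n=B_n\setminus Boo_n$. $\mathcal{A}_{C_n}$ on $B_n$: $\tilde\neg z=\{w\in B_n:w_1=z_2,\ w_2\le z_1\}$; for $\#\in\{\wedge,\vee,\to\}$, $z\tilde\#w=\{u\in Boo_n:u_1=z_1\#w_1\}$ if $z,w\in Boo_n$, else $\{u\in B_n:u_1=z_1\#w_1\}$. A valuation is $\nu$ with $\nu(\neg\alpha)\in\tilde\neg\nu(\alpha)$, $\nu(\alpha\#\beta)\in\nu(\alpha)\tilde\#\nu(\beta)$. $\mathcal{F}_{C_n}$: valuations with $\nu(\alpha)=t^n_0\Rightarrow\nu(\alpha\wedge\neg\alpha)=T_n$, and for $1\le k\le n-1$, $\nu(\alpha)=t^n_k\Rightarrow(\nu(\alpha\wedge\neg\alpha)\in I_n$ and $\nu(\alpha^1)=t^n_{k-1})$.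 *)

theory Defs
  imports Main
begin

datatype fm = FVar nat | FNeg fm | FAnd fm fm | FOr fm fm | FImp fm fm

primrec cpow :: "nat \<Rightarrow> fm \<Rightarrow> fm" where
  "cpow 0 a = a"
| "cpow (Suc k) a = FNeg (FAnd (cpow k a) (FNeg (cpow k a)))"

text \<open>Truth values {0,1} are rendered as bool (1 = True, 0 = False).\<close>
definition bivaluation :: "nat \<Rightarrow> (fm \<Rightarrow> bool) \<Rightarrow> bool" where
  "bivaluation n b \<longleftrightarrow>
     (\<forall>a c. b (FAnd a c) \<longleftrightarrow> b a \<and> b c) \<and>
     (\<forall>a c. b (FOr a c) \<longleftrightarrow> b a \<or> b c) \<and>
     (\<forall>a c. b (FImp a c) \<longleftrightarrow> \<not> b a \<or> b c) \<and>
     (\<forall>a. \<not> b a \<longrightarrow> b (FNeg a)) \<and>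
     (\<forall>a. b (FNeg (FNeg a)) \<longrightarrow> b a) \<and>
     (\<forall>a. (b (cpow (n - 1) a) = b (FNeg (cpow (n - 1) a))) \<longleftrightarrow> \<not> b (cpow n a)) \<and>
     (\<forall>a. (b a = b (FNeg a)) \<longleftrightarrow> b (FNeg (cpow 1 a))) \<and>
     (\<forall>a c. b a \<noteq> b (FNeg a) \<and> b c \<noteq> b (FNeg c) \<longrightarrow>
        b (FAnd a c) \<noteq> b (FNeg (FAnd a c)) \<and>
        b (FOr a c) \<noteq> b (FNeg (FOr a c)) \<and>
        b (FImp a c) \<noteq> b (FNeg (FImp a c)))"

text \<open>Tuples z in {0,1}^(n+1) are bool lists of length n+1;
  coordinate z_i (1-based) is crd z i.\<close>
definition crd :: "bool list \<Rightarrow> nat \<Rightarrow> bool" where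
  "crd z i = z ! (i - 1)"

definition Bn :: "nat \<Rightarrow> bool list set" where
  "Bn n = {z. length z = n + 1 \<and>
     (\<forall>k. 1 \<le> k \<and> k \<le> n \<longrightarrow> (\<forall>i\<in>{1..k}. crd z i) \<or> crd z (k + 1))}"

definition Tn :: "nat \<Rightarrow> bool list" where
  "Tn n = True # False # replicate (n - 1) True"

definition Fn :: "nat \<Rightarrow> bool list" where
  "Fn n = False # replicate n True"

text \<open>t^n_i: for i \<le> n-2, z_1 = z_2 = 1 and a single 0 at coordinate i+3;
  t^n_(n-1) is all ones.\<close>
definition tn :: "nat \<Rightarrow> nat \<Rightarrow> bool list" where
  "tn n i = (if i \<le> n - 2 then (replicate (n + 1) True)[i + 2 := False]
             else replicate (n + 1) True)"

definition Dn :: "nat \<Rightarrow> bool list set" where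
  "Dn n = {z \<in> Bn n. crd z 1}"

definition Boon :: "nat \<Rightarrow> bool list set" where
  "Boon n = {Tn n, Fn n}"

definition In :: "nat \<Rightarrow> bool list set" where
  "In n = Bn n - Boon n"

definition tneg :: "nat \<Rightarrow> bool list \<Rightarrow> bool list set" where
  "tneg n z = {w \<in> Bn n. crd w 1 = crd z 2 \<and> crd w 2 \<le> crd z 1}"

definition tbin :: "nat \<Rightarrow> (bool \<Rightarrow> bool \<Rightarrow> bool) \<Rightarrow> bool list \<Rightarrow> bool list \<Rightarrow> bool list set" where
  "tbin n op z w =
     (if z \<in> Boon n \<and> w \<in> Boon n
      then {u \<in> Boon n. crd u 1 = op (crd z 1) (crd w 1)}
      else {u \<in> Bn n. crd u 1 = op (crd z 1) (crd w 1)})"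

definition valuation :: "nat \<Rightarrow> (fm \<Rightarrow> bool list) \<Rightarrow> bool" where
  "valuation n v \<longleftrightarrow>
     (\<forall>a. v a \<in> Bn n) \<and>
     (\<forall>a. v (FNeg a) \<in> tneg n (v a)) \<and>
     (\<forall>a c. v (FAnd a c) \<in> tbin n (\<and>) (v a) (v c)) \<and>
     (\<forall>a c. v (FOr a c) \<in> tbin n (\<or>) (v a) (v c)) \<and>
     (\<forall>a c. v (FImp a c) \<in> tbin n (\<longrightarrow>) (v a) (v c))"

definition FCn :: "nat \<Rightarrow> (fm \<Rightarrow> bool list) set" where
  "FCn n = {v. valuation n v \<and>
     (\<forall>a. v a = tn n 0 \<longrightarrow> v (FAnd a (FNeg a)) = Tn n) \<and>
     (\<forall>k a. 1 \<le> k \<and> k \<le> n - 1 \<and> v a = tn n k \<longrightarrow>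
        v (FAnd a (FNeg a)) \<in> In n \<and> v (cpow 1 a) = tn n (k - 1))}"

definition bnu :: "nat \<Rightarrow> (fm \<Rightarrow> bool) \<Rightarrow> fm \<Rightarrow> bool list" where
  "bnu n b a = b a # b (FNeg a) # map (\<lambda>k. b (cpow k a)) [1..<n]"

end

theory Submission
  imports Defs
begin

text \<open>Call a formula well behaved when b separates it from its negation. By (B4) and (B7)
  well-behavedness propagates up the chain \<open>\<alpha>, \<alpha>\<^sup>1, \<alpha>\<^sup>2, \<dots>\<close>, and a formula with
  b-value 0 is well behaved, so a 0 in \<open>\<nu>(\<alpha>)\<close> forces every later coordinate to be 1.
  Hence \<open>\<nu>(\<alpha>)\<close> has at most one 0, i.e. lies in \<open>B\<^sub>n\<close>, and it is \<open>T\<^sub>n\<close> or \<open>F\<^sub>n\<close>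
  exactly when \<open>\<alpha>\<close> is well behaved; with (B8) this gives the valuation clauses.
  \<open>\<nu>(\<alpha>) = t\<^sup>n\<^sub>k\<close> says that \<open>\<alpha>, \<dots>, \<alpha>\<^sup>k\<close> hold together with their negations while
  \<open>\<alpha>\<^sup>k\<^sup>+\<^sup>1\<close> fails; passing to \<open>\<alpha>\<^sup>1\<close> shifts this pattern down by one, and for
  \<open>k = n - 1\<close> the new last coordinate \<open>\<alpha>\<^sup>n\<close> is false by (B6).\<close>

lemma Bn_iff:
  "z \<in> Bn n \<longleftrightarrow> length z = n + 1 \<and> (\<forall>i j. i < j \<longrightarrow> j \<le> n \<longrightarrow> z ! i \<or> z ! j)"
proof -
  have all_crd: "(\<forall>i\<in>{1..k}. crd z i) \<longleftrightarrow> (\<forall>i<k. z ! i)" for k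
    by (auto simp: crd_def) (metis One_nat_def Suc_leI atLeastAtMost_iff diff_Suc_1 le_add1 plus_1_eq_Suc)
  show ?thesis
    unfolding Bn_def mem_Collect_eq all_crd
    apply (auto simp: crd_def)
    subgoal for i j by (drule spec[of _ j]) auto
    done
qed

lemma Tn_eq: "1 \<le> n \<Longrightarrow> Tn n = True # False # replicate (n - 1) True"
  by (simp add: Tn_def)

lemma Fn_eq: "1 \<le> n \<Longrightarrow> Fn n = False # True # replicate (n - 1) True"
  by (cases n) (simp_all add: Fn_def)

lemma tn_nth: "k < n \<Longrightarrow> i \<le> n \<Longrightarrow> tn n k ! i \<longleftrightarrow> i \<noteq> k + 2"
  by (auto simp: tn_def nth_list_update nth_Cons')

lemma length_tn: "length (tn n k) = n + 1"
  by (simp add: tn_def)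

lemma cpow_add: "cpow (j + k) a = cpow j (cpow k a)"
  by (induction j) auto

text \<open>The clauses (B1)--(B8) in exactly the shape they have in \<open>bivaluation\<close>, so that
  \<open>Cn_bivaluationI\<close> only has to match conjuncts.\<close>
locale Cn_bivaluation =
  fixes n :: nat and b :: "fm \<Rightarrow> bool"
  assumes n_ge_2: "2 \<le> n"
    and FAnd_iff: "b (FAnd x y) \<longleftrightarrow> b x \<and> b y"
    and FOr_iff: "b (FOr x y) \<longleftrightarrow> b x \<or> b y"
    and FImp_iff: "b (FImp x y) \<longleftrightarrow> \<not> b x \<or> b y"
    and FNeg_if_not: "\<not> b x \<Longrightarrow> b (FNeg x)"
    and FNeg_FNeg_imp: "b (FNeg (FNeg x)) \<Longrightarrow> b x"
    and cpow_n_iff: "(b (cpow (n - 1) x) = b (FNeg (cpow (n - 1) x))) \<longleftrightarrow> \<not> b (cpow n x)"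
    and cpow1_iff: "(b x = b (FNeg x)) \<longleftrightarrow> b (FNeg (cpow 1 x))"
    and connectives_preserve_separation: "b x \<noteq> b (FNeg x) \<and> b y \<noteq> b (FNeg y) \<Longrightarrow>
      b (FAnd x y) \<noteq> b (FNeg (FAnd x y)) \<and>
      b (FOr x y) \<noteq> b (FNeg (FOr x y)) \<and>
      b (FImp x y) \<noteq> b (FNeg (FImp x y))"

lemma Cn_bivaluationI: "2 \<le> n \<Longrightarrow> bivaluation n b \<Longrightarrow> Cn_bivaluation n b"
  unfolding Cn_bivaluation_def bivaluation_def by (elim conjE) (intro conjI; assumption)

context Cn_bivaluation
begin

definition well_behaved :: "fm \<Rightarrow> bool" where
  "well_behaved x \<longleftrightarrow> b x \<noteq> b (FNeg x)"

lemma FNeg_cpow1_iff: "b (FNeg (cpow 1 x)) \<longleftrightarrow> \<not> well_behaved x"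
  using cpow1_iff by (simp add: well_behaved_def)

lemma well_behaved_binary:
  "well_behaved x \<Longrightarrow> well_behaved y \<Longrightarrow>
     well_behaved (FAnd x y) \<and> well_behaved (FOr x y) \<and> well_behaved (FImp x y)"
  using connectives_preserve_separation by (simp add: well_behaved_def)

lemma well_behaved_if_not: "\<not> b x \<Longrightarrow> well_behaved x"
  using FNeg_if_not well_behaved_def by blast

lemma cpow1_well_behaved:
  assumes "well_behaved x"
  shows "b (cpow 1 x) \<and> well_behaved (cpow 1 x)"
  using assms FNeg_cpow1_iff FNeg_if_not well_behaved_def by blast

lemma cpow_above_well_behaved:
  assumes "well_behaved (cpow j a)" and "j < m"
  shows "b (cpow m a) \<and> well_behaved (cpow m a)"
  using assms(2)
proof (induction m)
  case (Suc m)
  then have "well_behaved (cpow m a)"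
    using assms(1) by (cases "j = m") auto
  then show ?case using cpow1_well_behaved[of "cpow m a"] by simp
qed simp

lemma FNeg_cpow_if_below_true:
  assumes "b (FNeg a)" and "\<forall>i<j. b (cpow i a)"
  shows "b (FNeg (cpow j a))"
  using assms(2)
proof (induction j)
  case 0
  then show ?case using assms(1) by simp
next
  case (Suc j)
  then have "\<not> well_behaved (cpow j a)"
    by (simp add: well_behaved_def)
  then show ?case using FNeg_cpow1_iff[of "cpow j a"] by simp
qed

text \<open>This is where the bound \<open>n\<close> of \<open>C\<^sub>n\<close> enters: the chain of formulas holding
  together with their negations cannot reach length \<open>n\<close>.\<close>
lemma not_cpow_n_if_below_true:
  assumes "b (FNeg a)" and "\<forall>i<n. b (cpow i a)"
  shows "\<not> b (cpow n a)"
proof -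
  have "b (cpow (n - 1) a)" using assms(2) n_ge_2 by simp
  moreover have "b (FNeg (cpow (n - 1) a))"
    using FNeg_cpow_if_below_true assms by simp
  ultimately show ?thesis using cpow_n_iff[of a] by simp
qed

lemma length_bnu: "length (bnu n b a) = n + 1"
  using n_ge_2 by (simp add: bnu_def)

text \<open>The case \<open>i = 0\<close> is covered by truncated subtraction: \<open>cpow (0 - 1) a = a\<close>.\<close>
lemma bnu_nth:
  assumes "i \<le> n"
  shows "bnu n b a ! i = (if i = 1 then b (FNeg a) else b (cpow (i - 1) a))"
proof -
  consider "i = 0" | "i = 1" | j where "i = Suc (Suc j)" by (metis One_nat_def not0_implies_Suc)
  then show ?thesis
    by cases (use assms in \<open>auto simp: bnu_def nth_append\<close>)
qed

lemma bnu_nth_0 [simp]: "bnu n b a ! 0 = b a"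
  and bnu_nth_1 [simp]: "bnu n b a ! Suc 0 = b (FNeg a)"
  by (simp_all add: bnu_def)

lemma well_behaved_if_bnu_nth_false:
  assumes "i \<le> n" and "\<not> bnu n b a ! i"
  shows "well_behaved (cpow (i - 1) a)"
  using assms bnu_nth[of i a] well_behaved_if_not FNeg_if_not
  by (auto simp: well_behaved_def split: if_splits)

lemma bnu_in_Bn: "bnu n b a \<in> Bn n"
  unfolding Bn_iff
proof (intro conjI allI impI length_bnu)
  fix i j assume "i < j" "j \<le> n"
  have "bnu n b a ! j" if false_i: "\<not> bnu n b a ! i"
  proof (cases "j = 1")
    case True
    then have "\<not> b a" using false_i \<open>i < j\<close> by simp
    then show ?thesis using True FNeg_if_not bnu_nth[of 1 a] n_ge_2 by simp
  next
    case False
    have "well_behaved (cpow (i - 1) a)"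
      using well_behaved_if_bnu_nth_false false_i \<open>i < j\<close> \<open>j \<le> n\<close> by simp
    moreover have "i - 1 < j - 1" using \<open>i < j\<close> False by linarith
    ultimately have "b (cpow (j - 1) a)" using cpow_above_well_behaved by blast
    then show ?thesis using bnu_nth[of j a] False \<open>j \<le> n\<close> by simp
  qed
  then show "bnu n b a ! i \<or> bnu n b a ! j" by blast
qed

lemma bnu_well_behaved:
  assumes "well_behaved a"
  shows "bnu n b a = (if b a then Tn n else Fn n)"
proof -
  have "map (\<lambda>k. b (cpow k a)) [1..<n] = map (\<lambda>k. True) [1..<n]"
    using cpow_above_well_behaved[of 0 a] assms by simp
  then show ?thesis
    using assms n_ge_2 by (simp add: bnu_def Tn_eq Fn_eq map_replicate_const well_behaved_def)
qed

lemma bnu_in_Boon_iff: "bnu n b a \<in> Boon n \<longleftrightarrow> well_behaved a"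
proof
  assume "bnu n b a \<in> Boon n"
  then show "well_behaved a"
    using n_ge_2 by (auto simp: Boon_def Tn_eq Fn_eq bnu_def well_behaved_def)
qed (simp add: bnu_well_behaved Boon_def)

lemma bnu_in_tneg: "bnu n b (FNeg a) \<in> tneg n (bnu n b a)"
  unfolding tneg_def using bnu_in_Bn FNeg_FNeg_imp by (auto simp: crd_def)

lemma bnu_in_tbin:
  assumes "b (C x y) \<longleftrightarrow> f (b x) (b y)"
    and "well_behaved x \<Longrightarrow> well_behaved y \<Longrightarrow> well_behaved (C x y)"
  shows "bnu n b (C x y) \<in> tbin n f (bnu n b x) (bnu n b y)"
  using assms bnu_in_Boon_iff bnu_in_Bn unfolding tbin_def by (auto simp: crd_def)

lemma valuation_bnu: "valuation n (bnu n b)"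
proof -
  have "bnu n b (FAnd x y) \<in> tbin n (\<and>) (bnu n b x) (bnu n b y)"
    and "bnu n b (FOr x y) \<in> tbin n (\<or>) (bnu n b x) (bnu n b y)"
    and "bnu n b (FImp x y) \<in> tbin n (\<longrightarrow>) (bnu n b x) (bnu n b y)" for x y
    by (rule bnu_in_tbin; simp add: FAnd_iff FOr_iff FImp_iff well_behaved_binary)+
  then show ?thesis
    unfolding valuation_def using bnu_in_Bn bnu_in_tneg by blast
qed

lemma bnu_eq_tn_iff:
  assumes "k < n"
  shows "bnu n b a = tn n k \<longleftrightarrow>
    b a \<and> b (FNeg a) \<and> (\<forall>j<n. b (cpow j a) \<longleftrightarrow> j \<noteq> k + 1)"
proof -
  have "bnu n b a = tn n k \<longleftrightarrow> (\<forall>i\<le>n. bnu n b a ! i \<longleftrightarrow> i \<noteq> k + 2)"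
    using assms by (auto simp: list_eq_iff_nth_eq length_bnu length_tn tn_nth)
  also have "\<dots> \<longleftrightarrow> b a \<and> b (FNeg a) \<and> (\<forall>j<n. b (cpow j a) \<longleftrightarrow> j \<noteq> k + 1)"
  proof
    assume coord: "\<forall>i\<le>n. bnu n b a ! i \<longleftrightarrow> i \<noteq> k + 2"
    have "b (cpow j a) \<longleftrightarrow> j \<noteq> k + 1" if "j < n" for j
    proof (cases j)
      case 0
      then show ?thesis using coord[rule_format, of 0] by simp
    next
      case (Suc i)
      then show ?thesis using coord[rule_format, of "Suc j"] bnu_nth[of "Suc j" a] that by simp
    qed
    then show "b a \<and> b (FNeg a) \<and> (\<forall>j<n. b (cpow j a) \<longleftrightarrow> j \<noteq> k + 1)"
      using coord[rule_format, of 0] coord[rule_format, of 1] bnu_nth n_ge_2 by auto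
  next
    assume "b a \<and> b (FNeg a) \<and> (\<forall>j<n. b (cpow j a) \<longleftrightarrow> j \<noteq> k + 1)"
    then have neg: "b (FNeg a)" and levels: "\<forall>j<n. b (cpow j a) \<longleftrightarrow> j \<noteq> k + 1"
      by auto
    show "\<forall>i\<le>n. bnu n b a ! i \<longleftrightarrow> i \<noteq> k + 2"
    proof (intro allI impI)
      fix i assume "i \<le> n"
      then show "bnu n b a ! i \<longleftrightarrow> i \<noteq> k + 2"
        using neg levels[rule_format, of "i - 1"] bnu_nth[of i a] n_ge_2
        by (cases "i = 1") auto
    qed
  qed
  finally show ?thesis .
qed

lemma bnu_FAnd_self_FNeg_tn0:
  assumes "bnu n b a = tn n 0"
  shows "bnu n b (FAnd a (FNeg a)) = Tn n"
proof -
  have "b a" "b (FNeg a)" and levels: "\<forall>j<n. b (cpow j a) \<longleftrightarrow> j \<noteq> 1"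
    using assms bnu_eq_tn_iff[of 0 a] n_ge_2 by auto
  moreover have "\<not> b (cpow 1 a)" using levels[rule_format, of 1] n_ge_2 by simp
  ultimately show ?thesis
    using bnu_well_behaved FAnd_iff by (simp add: well_behaved_def)
qed

lemma bnu_FAnd_self_FNeg_In:
  assumes "1 \<le> k" "k < n" and "bnu n b a = tn n k"
  shows "bnu n b (FAnd a (FNeg a)) \<in> In n"
proof -
  have "b a" "b (FNeg a)" and levels: "\<forall>j<n. b (cpow j a) \<longleftrightarrow> j \<noteq> k + 1"
    using assms bnu_eq_tn_iff by auto
  moreover have "b (cpow 1 a)" using levels[rule_format, of 1] assms(1) n_ge_2 by simp
  ultimately have "\<not> well_behaved (FAnd a (FNeg a))"
    using FAnd_iff by (simp add: well_behaved_def)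
  then show ?thesis using bnu_in_Boon_iff bnu_in_Bn by (simp add: In_def)
qed

lemma bnu_cpow1_tn:
  assumes "1 \<le> k" "k < n" and "bnu n b a = tn n k"
  shows "bnu n b (cpow 1 a) = tn n (k - 1)"
proof -
  have a: "b a" "b (FNeg a)" and levels: "\<And>j. j < n \<Longrightarrow> b (cpow j a) \<longleftrightarrow> j \<noteq> k + 1"
    using assms bnu_eq_tn_iff by auto
  have top: "b (cpow n a) \<longleftrightarrow> n \<noteq> k + 1"
  proof (cases "k + 1 < n")
    case True
    have "well_behaved (cpow (k + 1) a)" using levels[of "k + 1"] True well_behaved_if_not by blast
    then show ?thesis using cpow_above_well_behaved[of "k + 1" a n] True by simp
  next
    case False
    then show ?thesis using not_cpow_n_if_below_true a levels assms(2) by simp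
  qed
  have shifted: "b (cpow j (cpow 1 a)) \<longleftrightarrow> j \<noteq> k" if "j < n" for j
  proof -
    have "b (cpow (j + 1) a) \<longleftrightarrow> j + 1 \<noteq> k + 1"
      using levels[of "j + 1"] top that by (cases "j + 1 = n") auto
    then show ?thesis by (simp only: cpow_add) simp
  qed
  have "b (FNeg (cpow 1 a))"
    using a FNeg_cpow1_iff by (simp add: well_behaved_def)
  then show ?thesis
    using bnu_eq_tn_iff[of "k - 1" "cpow 1 a"] shifted shifted[of 0] assms(1,2) n_ge_2 by simp
qed

lemma bnu_in_FCn: "bnu n b \<in> FCn n"
proof -
  have "bnu n b (FAnd a (FNeg a)) \<in> In n \<and> bnu n b (cpow 1 a) = tn n (k - 1)"
    if "1 \<le> k \<and> k \<le> n - 1 \<and> bnu n b a = tn n k" for k a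
    using that n_ge_2 bnu_FAnd_self_FNeg_In[of k a] bnu_cpow1_tn[of k a] by auto
  then show ?thesis
    unfolding FCn_def using valuation_bnu bnu_FAnd_self_FNeg_tn0 by blast
qed

lemma designated_iff: "b a \<longleftrightarrow> bnu n b a \<in> Dn n"
  using bnu_in_Bn by (simp add: Dn_def crd_def)

end

theorem mainTheorem12:
  fixes n :: nat and b :: "fm \<Rightarrow> bool"
  assumes "n \<ge> 2" and "bivaluation n b"
  shows "valuation n (bnu n b) \<and> bnu n b \<in> FCn n \<and>
         (\<forall>a. b a \<longleftrightarrow> bnu n b a \<in> Dn n)"
proof -
  interpret Cn_bivaluation n b
    using assms by (rule Cn_bivaluationI)
  show ?thesis
    using valuation_bnu bnu_in_FCn designated_iff by blast
qed

end
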